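(* Let $(S_j)_{j\ge1}$ be a $\boldsymbol\mu$-geometrically Cauchy sequence in $\mathbb T$. Then there is $S\in\mathbb T$ such that $S_j$ converges $\boldsymbol\mu$-geometrically to $S$.
   Context: $\mathbb T$ is the field of real grid-based transseries over the ordered group $\mathfrak G$ of transmonomials; $\operatorname{mag}T$ is the dominant monomial of $T\ne0$. A ratio set is a finite $\boldsymbol\mu\subset\{\mathfrak g\prec1\}$; $\boldsymbol\mu^*$ (resp. $\boldsymbol\mu^+$) is the set of products of zero or more (resp. one or more) elements of $\boldsymbol\mu$. Monomials: $\mathfrak m\prec^{\boldsymbol\mu}\mathfrak n$ iff $\mathfrak m/\mathfrak n\in\boldsymbol\mu^+$; transseries: $A\prec^{\boldsymbol\mu}B$ (written also $B\succ^{\boldsymbol\mu}A$) iff each $\mathfrak a\in\operatorname{supp}A$ is $\prec^{\boldsymbol\mu}$ some $\mathfrak b\in\operatorname{supp}B$. $\boldsymbol\mu$ witnesses nonzero $T$ iff $\operatorname{supp}T\subseteq(\operatorname{mag}T)\boldsymbol\mu^*$. A sequence $(S_j)$ is $\boldsymbol\mu$-geometrically Cauchy if for all $j$, $\boldsymbol\mu$ witnesses $S_{j+1}-S_j$ and (for $j\ge2$) $S_j-S_{j-1}\succ^{\boldsymbol\mu}S_{j+1}-S_j$; equivalently the series $\sum_{j\ge1}(S_{j+1}-S_j)$ is $\boldsymbol\mu$-geometrically convergent, where $\sum A_j$ is $\boldsymbol\mu$-geometrically convergent if $\boldsymbol\mu$ witnesses each $A_j$ and $A_j\succ^{\boldsymbol\mu}A_{j+1}$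 for all $j$. $S_j$ converges $\boldsymbol\mu$-geometrically to $S$ if for all $j$, $\boldsymbol\mu$ witnesses $S-S_j$ and $S-S_j\succ^{\boldsymbol\mu}S-S_{j+1}$. *)

theory Defs
  imports Complex_Main "HOL-Library.Function_Algebras"
begin

text \<open>Monomials form a linearly ordered abelian group, written additively:
  the product of monomials is +, the unit monomial is 0, and "m is infinitesimal"
  (m \<prec> 1) is m < 0.  A (grid-based) transseries is a real coefficient function
  on monomials with grid-based support.\<close>

definition supp :: "('g \<Rightarrow> real) \<Rightarrow> 'g set" where
  "supp T = {m. T m \<noteq> 0}"

definition ratio_set :: "'g::linordered_ab_group_add set \<Rightarrow> bool" where
  "ratio_set \<mu> \<longleftrightarrow> finite \<mu> \<and> (\<forall>e\<in>\<mu>. e < 0)"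

definition rstar :: "'g::linordered_ab_group_add set \<Rightarrow> 'g set" where
  "rstar \<mu> = {sum_list xs | xs. set xs \<subseteq> \<mu>}"

definition rplus :: "'g::linordered_ab_group_add set \<Rightarrow> 'g set" where
  "rplus \<mu> = {sum_list xs | xs. set xs \<subseteq> \<mu> \<and> xs \<noteq> []}"

definition grid_based :: "('g::linordered_ab_group_add \<Rightarrow> real) \<Rightarrow> bool" where
  "grid_based T \<longleftrightarrow> (\<exists>m \<mu>. ratio_set \<mu> \<and> supp T \<subseteq> {m + w | w. w \<in> rstar \<mu>})"

definition mag :: "('g::linordered_ab_group_add \<Rightarrow> real) \<Rightarrow> 'g" where
  "mag T = (THE m. m \<in> supp T \<and> (\<forall>n\<in>supp T. n \<le> m))"

definition mono_prec :: "'g::linordered_ab_group_add set \<Rightarrow> 'g \<Rightarrow> 'g \<Rightarrow> bool" where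
  "mono_prec \<mu> m n \<longleftrightarrow> m - n \<in> rplus \<mu>"

definition ts_prec :: "'g::linordered_ab_group_add set \<Rightarrow> ('g \<Rightarrow> real) \<Rightarrow> ('g \<Rightarrow> real) \<Rightarrow> bool" where
  "ts_prec \<mu> A B \<longleftrightarrow> (\<forall>a\<in>supp A. \<exists>b\<in>supp B. mono_prec \<mu> a b)"

definition witnesses :: "'g::linordered_ab_group_add set \<Rightarrow> ('g \<Rightarrow> real) \<Rightarrow> bool" where
  "witnesses \<mu> T \<longleftrightarrow> T \<noteq> 0 \<and> supp T \<subseteq> {mag T + w | w. w \<in> rstar \<mu>}"

definition geom_cauchy :: "'g::linordered_ab_group_add set \<Rightarrow> (nat \<Rightarrow> 'g \<Rightarrow> real) \<Rightarrow> bool" where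
  "geom_cauchy \<mu> S \<longleftrightarrow>
     (\<forall>j\<ge>1. witnesses \<mu> (S (Suc j) - S j)) \<and>
     (\<forall>j\<ge>2. ts_prec \<mu> (S (Suc j) - S j) (S j - S (j - 1)))"

definition geom_converges :: "'g::linordered_ab_group_add set \<Rightarrow> (nat \<Rightarrow> 'g \<Rightarrow> real) \<Rightarrow> ('g \<Rightarrow> real) \<Rightarrow> bool" where
  "geom_converges \<mu> S L \<longleftrightarrow>
     (\<forall>j\<ge>1. witnesses \<mu> (L - S j) \<and> ts_prec \<mu> (L - S (Suc j)) (L - S j))"

end

theory Submission
  imports Defs "HOL-Library.Multiset"
begin

text \<open>Write D_j = S_(j+1) - S_j. Geometric Cauchyness makes every monomial of D_(j+k)
  a product of mag D_j with at least k ratios. By Dickson's lemma a fixed monomial has only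
  boundedly long representations as such a product, so every coefficient of S_j is eventually
  constant and the limit L exists pointwise. Then L - S_j = \<Sum>_(i \<ge> j) D_i has dominant monomial
  mag D_j and support in (mag D_j) \<mu>^*, which is geometric convergence; and
  L = S_1 + (L - S_1) is grid-based.\<close>

section \<open>Dickson's lemma\<close>

lemma nat_seq_nondecreasing_subseq:
  fixes h :: "nat \<Rightarrow> nat"
  shows "\<exists>s. strict_mono s \<and> (\<forall>n. h (s n) \<le> h (s (Suc n)))"
proof -
  obtain s where s: "strict_mono s" "monoseq (\<lambda>n. h (s n))"
    using seq_monosub by blast
  show ?thesis
  proof (cases "\<forall>m. \<forall>n\<ge>m. h (s m) \<le> h (s n)")
    case True
    with s(1) show ?thesis by auto
  next
    case False
    then have antitone: "h (s n) \<le> h (s m)" if "m \<le> n" for m n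
      using s(2) that unfolding monoseq_def by blast
    obtain n0 where n0: "\<forall>n. h (s n0) \<le> h (s n)"
      using ex_has_least_nat[of "\<lambda>_. True" 0 "\<lambda>n. h (s n)"] by auto
    have const: "h (s (n + n0)) = h (s n0)" for n
      using antitone[of n0 "n + n0"] n0 by (simp add: order_antisym)
    have "strict_mono (\<lambda>n. s (n + n0))"
      using s(1) by (simp add: strict_mono_def)
    moreover have "h (s (n + n0)) \<le> h (s (Suc n + n0))" for n
      unfolding const ..
    ultimately show ?thesis by blast
  qed
qed

lemma mset_seq_subset_chain_subseq:
  fixes M :: "nat \<Rightarrow> 'a multiset"
  assumes "finite A" and "\<forall>n. set_mset (M n) \<subseteq> A"
  shows "\<exists>r. strict_mono r \<and> (\<forall>n. M (r n) \<subseteq># M (r (Suc n)))"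
  using assms
proof (induction A arbitrary: M rule: finite_induct)
  case empty
  then have "M n = {#}" for n by auto
  with strict_mono_id show ?case by auto
next
  case (insert a A)
  define M' where "M' n = filter_mset (\<lambda>x. x \<noteq> a) (M n)" for n
  have "\<forall>n. set_mset (M' n) \<subseteq> A"
    using insert.prems unfolding M'_def by auto
  then obtain r where r: "strict_mono r" "\<forall>n. M' (r n) \<subseteq># M' (r (Suc n))"
    using insert.IH by blast
  obtain s where s: "strict_mono s" "\<forall>n. count (M (r (s n))) a \<le> count (M (r (s (Suc n)))) a"
    using nat_seq_nondecreasing_subseq[of "\<lambda>n. count (M (r n)) a"] by blast
  have "M' (r (s n)) \<subseteq># M' (r (s (Suc n)))" for n
    using subset_mset.lift_Suc_mono_le[of "\<lambda>n. M' (r n)"] r(2) s(1)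
    by (simp add: strict_mono_less_eq)
  then have count_M': "count (M' (r (s n))) x \<le> count (M' (r (s (Suc n)))) x" for n x
    by (simp add: subseteq_mset_def)
  have "count (M (r (s n))) x \<le> count (M (r (s (Suc n)))) x" for n x
  proof (cases "x = a")
    case False
    then show ?thesis using count_M'[of n x] by (simp add: M'_def)
  qed (use s(2) in simp)
  moreover have "strict_mono (\<lambda>n. r (s n))"
    using r(1) s(1) by (simp add: strict_mono_def)
  ultimately show ?case
    unfolding subseteq_mset_def by (intro exI[of _ "r \<circ> s"]) auto
qed

section \<open>Products of ratios\<close>

lemma in_rstar_iff_sum_mset: "w \<in> rstar \<mu> \<longleftrightarrow> (\<exists>M. set_mset M \<subseteq> \<mu> \<and> w = sum_mset M)"
proof
  assume "w \<in> rstar \<mu>"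
  then obtain xs where "set xs \<subseteq> \<mu>" "w = sum_list xs" unfolding rstar_def by blast
  then show "\<exists>M. set_mset M \<subseteq> \<mu> \<and> w = sum_mset M"
    by (intro exI[of _ "mset xs"]) (simp add: sum_mset_sum_list)
next
  assume "\<exists>M. set_mset M \<subseteq> \<mu> \<and> w = sum_mset M"
  then obtain xs where "set xs \<subseteq> \<mu>" "w = sum_list xs"
    by (metis ex_mset set_mset_mset sum_mset_sum_list)
  then show "w \<in> rstar \<mu>" unfolding rstar_def by blast
qed

lemma in_rplus_iff_sum_mset:
  "w \<in> rplus \<mu> \<longleftrightarrow> (\<exists>M. set_mset M \<subseteq> \<mu> \<and> M \<noteq> {#} \<and> w = sum_mset M)"
proof
  assume "w \<in> rplus \<mu>"
  then obtain xs where "set xs \<subseteq> \<mu>" "xs \<noteq> []" "w = sum_list xs" unfolding rplus_def by blast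
  then show "\<exists>M. set_mset M \<subseteq> \<mu> \<and> M \<noteq> {#} \<and> w = sum_mset M"
    by (intro exI[of _ "mset xs"]) (simp add: sum_mset_sum_list)
next
  assume "\<exists>M. set_mset M \<subseteq> \<mu> \<and> M \<noteq> {#} \<and> w = sum_mset M"
  then obtain xs where "set xs \<subseteq> \<mu>" "xs \<noteq> []" "w = sum_list xs"
    by (metis ex_mset mset_zero_iff set_mset_mset sum_mset_sum_list)
  then show "w \<in> rplus \<mu>" unfolding rplus_def by blast
qed

lemma sum_mset_neg:
  fixes M :: "'g::linordered_ab_group_add multiset"
  assumes "\<And>e. e \<in># M \<Longrightarrow> e < 0" and "M \<noteq> {#}"
  shows "sum_mset M < 0"
  using assms
proof (induction M)
  case (add x M)
  then show ?case by (cases "M = {#}") (auto intro: add_neg_neg)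
qed simp

lemma sum_mset_nonpos:
  fixes M :: "'g::linordered_ab_group_add multiset"
  assumes "\<And>e. e \<in># M \<Longrightarrow> e < 0"
  shows "sum_mset M \<le> 0"
  using sum_mset_neg[OF assms] by (cases "M = {#}") (auto simp: less_imp_le)

lemma sum_mset_strict_antimono:
  fixes M N :: "'g::linordered_ab_group_add multiset"
  assumes "M \<subset># N" and "\<And>e. e \<in># N \<Longrightarrow> e < 0"
  shows "sum_mset N < sum_mset M"
proof -
  have N: "N = M + (N - M)"
    using assms(1) by (simp add: subset_mset.add_diff_inverse)
  have "N - M \<noteq> {#}"
  proof
    assume "N - M = {#}"
    with N assms(1) show False by simp
  qed
  then have "sum_mset (N - M) < 0"
    using assms(2) by (intro sum_mset_neg) (auto dest: in_diffD)
  then show ?thesis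
    by (subst N) simp
qed

lemma sum_mset_antimono:
  fixes M N :: "'g::linordered_ab_group_add multiset"
  assumes "M \<subseteq># N" and "\<And>e. e \<in># N \<Longrightarrow> e < 0"
  shows "sum_mset N \<le> sum_mset M"
  using sum_mset_strict_antimono[OF _ assms(2)] assms(1)
  by (cases "M = N") (auto simp: subset_mset.less_le less_imp_le)

lemma rstar_nonpos:
  assumes "ratio_set \<mu>" and "w \<in> rstar \<mu>"
  shows "w \<le> 0"
  using assms sum_mset_nonpos unfolding ratio_set_def in_rstar_iff_sum_mset by blast

lemma rplus_neg:
  assumes "ratio_set \<mu>" and "w \<in> rplus \<mu>"
  shows "w < 0"
  using assms sum_mset_neg unfolding ratio_set_def in_rplus_iff_sum_mset by blast

lemma rstar_mono: "\<mu> \<subseteq> \<nu> \<Longrightarrow> rstar \<mu> \<subseteq> rstar \<nu>"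
  unfolding rstar_def by blast

lemma rstar_add: "v \<in> rstar \<mu> \<Longrightarrow> w \<in> rstar \<mu> \<Longrightarrow> v + w \<in> rstar \<mu>"
proof -
  assume "v \<in> rstar \<mu>" "w \<in> rstar \<mu>"
  then obtain M N where "set_mset M \<subseteq> \<mu>" "v = sum_mset M" "set_mset N \<subseteq> \<mu>" "w = sum_mset N"
    unfolding in_rstar_iff_sum_mset by blast
  then show "v + w \<in> rstar \<mu>"
    unfolding in_rstar_iff_sum_mset by (intro exI[of _ "M + N"]) simp
qed

lemma rstar_zero: "0 \<in> rstar \<mu>"
  unfolding rstar_def by (intro CollectI exI[of _ "[]"]) simp

lemma rstar_generator: "e \<in> \<mu> \<Longrightarrow> e \<in> rstar \<mu>"
  unfolding rstar_def by (intro CollectI exI[of _ "[e]"]) simp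

abbreviation grid :: "'g::linordered_ab_group_add \<Rightarrow> 'g set \<Rightarrow> 'g set" where
  "grid m \<mu> \<equiv> {m + w | w. w \<in> rstar \<mu>}"

lemma grid_no_strict_incseq:
  assumes "ratio_set \<mu>" and "\<forall>n. f n \<in> grid c \<mu>"
  shows "\<not> (\<forall>n. f n < f (Suc n))"
proof
  assume incr: "\<forall>n. f n < f (Suc n)"
  have "\<forall>n. \<exists>M. set_mset M \<subseteq> \<mu> \<and> f n = c + sum_mset M"
  proof
    fix n
    obtain w where "f n = c + w" "w \<in> rstar \<mu>" using assms(2) by blast
    then show "\<exists>M. set_mset M \<subseteq> \<mu> \<and> f n = c + sum_mset M"
      unfolding in_rstar_iff_sum_mset by blast
  qed
  then obtain M where M: "\<forall>n. set_mset (M n) \<subseteq> \<mu> \<and> f n = c + sum_mset (M n)"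
    by (rule choice_iff[THEN iffD1, elim_format]) blast
  obtain r where r: "strict_mono r" "\<forall>n. M (r n) \<subseteq># M (r (Suc n))"
    using mset_seq_subset_chain_subseq[of \<mu> M] assms(1) M unfolding ratio_set_def by auto
  have "sum_mset (M (r 1)) \<le> sum_mset (M (r 0))"
    using r(2)[rule_format, of 0] M assms(1) unfolding ratio_set_def
    by (intro sum_mset_antimono) auto
  moreover have "f (r 0) < f (r 1)"
    using lift_Suc_mono_less[of f] incr strict_monoD[OF r(1), of 0 1] by simp
  ultimately show False using M by (metis add_le_cancel_left not_less)
qed

lemma grid_subset_has_max:
  assumes "ratio_set \<mu>" and "A \<subseteq> grid c \<mu>" and "A \<noteq> {}"
  obtains m where "m \<in> A" and "\<forall>n\<in>A. n \<le> m"
proof -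
  have "wf {(x, y). x \<in> A \<and> y \<in> A \<and> y < x}"
    unfolding wf_iff_no_infinite_down_chain
    using grid_no_strict_incseq[OF assms(1)] assms(2) by blast
  moreover obtain a where "a \<in> A" using assms(3) by blast
  ultimately obtain m where "m \<in> A" "\<forall>n\<in>A. \<not> m < n"
    by (rule wfE_min) blast
  then show ?thesis using that by (meson not_le_imp_less)
qed

lemma rstar_representation_size_bounded:
  assumes "ratio_set \<mu>"
  obtains N where "\<And>M. set_mset M \<subseteq> \<mu> \<Longrightarrow> sum_mset M = x \<Longrightarrow> size M \<le> N"
proof (rule ccontr)
  assume "\<not> thesis"
  with that have "\<forall>n. \<exists>M. set_mset M \<subseteq> \<mu> \<and> sum_mset M = x \<and> n \<le> size M"
    using linorder_le_cases by blast
  then obtain M where M: "\<forall>n. set_mset (M n) \<subseteq> \<mu> \<and> sum_mset (M n) = x \<and> n \<le> size (M n)"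
    by (rule choice_iff[THEN iffD1, elim_format]) blast
  obtain r where r: "strict_mono r" "\<forall>n. M (r n) \<subseteq># M (r (Suc n))"
    using mset_seq_subset_chain_subseq[of \<mu> M] assms M unfolding ratio_set_def by auto
  have "M (r n) = M (r (Suc n))" for n
    using sum_mset_strict_antimono[of "M (r n)" "M (r (Suc n))"] r(2) M assms
    unfolding ratio_set_def subset_mset.less_le by auto
  then have "M (r n) = M (r 0)" for n
    by (induction n) simp_all
  then have bounded: "r n \<le> size (M (r 0))" for n
    using M by (metis (no_types))
  show False
    using strict_mono_imp_increasing[OF r(1), of "Suc (size (M (r 0)))"]
      bounded[of "Suc (size (M (r 0)))"] by simp
qed

section \<open>Dominant monomials and grid-based transseries\<close>

lemma mag_eqI:
  assumes "m \<in> supp T" and "\<forall>n\<in>supp T. n \<le> m"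
  shows "mag T = m"
  unfolding mag_def
proof (rule the_equality)
  show "m \<in> supp T \<and> (\<forall>n\<in>supp T. n \<le> m)" using assms by blast
qed (use assms in \<open>blast intro: order_antisym\<close>)

lemma mag_in_supp:
  assumes "ratio_set \<mu>" and "witnesses \<mu> T"
  shows "mag T \<in> supp T"
proof -
  have "supp T \<noteq> {}" and "supp T \<subseteq> grid (mag T) \<mu>"
    using assms(2) unfolding witnesses_def supp_def by (auto simp: fun_eq_iff)
  then obtain m where "m \<in> supp T" "\<forall>n\<in>supp T. n \<le> m"
    using grid_subset_has_max[OF assms(1)] by blast
  then show ?thesis by (simp add: mag_eqI)
qed

lemma grid_Un_subset_grid:
  assumes "ratio_set \<mu>1" and "ratio_set \<mu>2" and "m2 \<le> m1"
  shows "\<exists>\<nu>. ratio_set \<nu> \<and> grid m1 \<mu>1 \<union> grid m2 \<mu>2 \<subseteq> grid m1 \<nu>"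
proof -
  define \<nu> where "\<nu> = \<mu>1 \<union> \<mu>2 \<union> (if m2 < m1 then {m2 - m1} else {})"
  have "ratio_set \<nu>"
    using assms unfolding ratio_set_def \<nu>_def by auto
  have shift: "m2 - m1 \<in> rstar \<nu>"
  proof (cases "m2 = m1")
    case False
    with assms(3) show ?thesis by (intro rstar_generator) (simp add: \<nu>_def)
  qed (simp add: rstar_zero)
  have "rstar \<mu>1 \<subseteq> rstar \<nu>" and "rstar \<mu>2 \<subseteq> rstar \<nu>"
    unfolding \<nu>_def by (rule rstar_mono; blast)+
  then have "grid m1 \<mu>1 \<subseteq> grid m1 \<nu>"
    by blast
  moreover have "x \<in> grid m1 \<nu>" if "x \<in> grid m2 \<mu>2" for x
  proof -
    obtain w where x: "x = m2 + w" and "w \<in> rstar \<mu>2"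
      using \<open>x \<in> grid m2 \<mu>2\<close> by blast
    then have "m2 - m1 + w \<in> rstar \<nu>"
      using shift \<open>rstar \<mu>2 \<subseteq> rstar \<nu>\<close> by (blast intro: rstar_add)
    moreover have "x = m1 + (m2 - m1 + w)" by (simp add: x)
    ultimately show ?thesis by blast
  qed
  ultimately show ?thesis
    using \<open>ratio_set \<nu>\<close> by blast
qed

lemma grid_based_add:
  assumes "grid_based A" and "grid_based B"
  shows "grid_based (A + B)"
proof -
  obtain mA \<mu>A mB \<mu>B where A: "ratio_set \<mu>A" "supp A \<subseteq> grid mA \<mu>A"
    and B: "ratio_set \<mu>B" "supp B \<subseteq> grid mB \<mu>B"
    using assms unfolding grid_based_def by blast
  have AB: "supp A \<union> supp B \<subseteq> grid mA \<mu>A \<union> grid mB \<mu>B"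
    using A(2) B(2) by (rule Un_mono)
  obtain m \<nu> where "ratio_set \<nu>" "grid mA \<mu>A \<union> grid mB \<mu>B \<subseteq> grid m \<nu>"
  proof (cases "mB \<le> mA")
    case True
    then show ?thesis using grid_Un_subset_grid[OF A(1) B(1), of mB mA] that by blast
  next
    case False
    then have "mA \<le> mB" by simp
    then obtain \<nu> where "ratio_set \<nu>" "grid mB \<mu>B \<union> grid mA \<mu>A \<subseteq> grid mB \<nu>"
      using grid_Un_subset_grid[OF B(1) A(1)] by blast
    then show ?thesis using that by (simp add: sup_commute)
  qed
  moreover have "supp (A + B) \<subseteq> supp A \<union> supp B"
    unfolding supp_def by auto
  ultimately show ?thesis
    unfolding grid_based_def using AB by (meson order_trans)
qed

lemma witnesses_imp_grid_based: "ratio_set \<mu> \<Longrightarrow> witnesses \<mu> T \<Longrightarrow> grid_based T"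
  unfolding witnesses_def grid_based_def by blast

section \<open>Limits of geometrically Cauchy sequences\<close>

locale geom_cauchy_seq =
  fixes \<mu> :: "'g::linordered_ab_group_add set" and S :: "nat \<Rightarrow> 'g \<Rightarrow> real"
  assumes ratio_set: "ratio_set \<mu>" and cauchy: "geom_cauchy \<mu> S"
begin

definition \<Delta> :: "nat \<Rightarrow> 'g \<Rightarrow> real" where
  "\<Delta> j = S (Suc j) - S j"

text \<open>Here \<open>lim\<close> is not junk: each coefficient sequence is eventually constant
  (lemma S_eventually_limit).\<close>
definition limit :: "'g \<Rightarrow> real" where
  "limit x = lim (\<lambda>j. S j x)"

lemma witnesses_\<Delta>: "j \<ge> 1 \<Longrightarrow> witnesses \<mu> (\<Delta> j)"
  using cauchy unfolding geom_cauchy_def \<Delta>_def by blast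

lemma \<Delta>_prec: "j \<ge> 1 \<Longrightarrow> ts_prec \<mu> (\<Delta> (Suc j)) (\<Delta> j)"
proof -
  assume "j \<ge> 1"
  have "\<forall>j\<ge>2. ts_prec \<mu> (S (Suc j) - S j) (S j - S (j - 1))"
    using cauchy unfolding geom_cauchy_def by blast
  from this[rule_format, of "Suc j"] \<open>j \<ge> 1\<close> show ?thesis
    by (simp add: \<Delta>_def)
qed

lemma supp_\<Delta>_later:
  assumes "j \<ge> 1" and "a \<in> supp (\<Delta> (j + k))"
  shows "\<exists>M. set_mset M \<subseteq> \<mu> \<and> k \<le> size M \<and> a = mag (\<Delta> j) + sum_mset M"
  using assms(2)
proof (induction k arbitrary: a)
  case 0
  then obtain w where "a = mag (\<Delta> j) + w" "w \<in> rstar \<mu>"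
    using witnesses_\<Delta>[OF assms(1)] unfolding witnesses_def by auto
  then show ?case unfolding in_rstar_iff_sum_mset by auto
next
  case (Suc k)
  then obtain b where b: "b \<in> supp (\<Delta> (j + k))" "a - b \<in> rplus \<mu>"
    using \<Delta>_prec[of "j + k"] assms(1) unfolding ts_prec_def mono_prec_def by auto
  then obtain M' where M': "set_mset M' \<subseteq> \<mu>" "M' \<noteq> {#}" "a - b = sum_mset M'"
    unfolding in_rplus_iff_sum_mset by blast
  obtain M where M: "set_mset M \<subseteq> \<mu>" "k \<le> size M" "b = mag (\<Delta> j) + sum_mset M"
    using Suc.IH[OF b(1)] by blast
  have "Suc k \<le> size (M + M')"
    using M(2) M'(2) by (simp add: Suc_le_eq nonempty_has_size)
  moreover have "a = mag (\<Delta> j) + sum_mset (M + M')"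
    using M(3) M'(3) by (simp add: algebra_simps)
  ultimately show ?case
    using M(1) M'(1) by (intro exI[of _ "M + M'"]) auto
qed

lemma supp_\<Delta>_later_rstar:
  assumes "j \<ge> 1" and "j \<le> i" and "a \<in> supp (\<Delta> i)"
  shows "a - mag (\<Delta> j) \<in> rstar \<mu>"
  using supp_\<Delta>_later[OF assms(1), where k = "i - j"] assms(2,3)
  unfolding in_rstar_iff_sum_mset by (auto simp: algebra_simps)

lemma supp_\<Delta>_later_rplus:
  assumes "j \<ge> 1" and "j < i" and "a \<in> supp (\<Delta> i)"
  shows "a - mag (\<Delta> j) \<in> rplus \<mu>"
proof -
  obtain M where "set_mset M \<subseteq> \<mu>" "i - j \<le> size M" "a = mag (\<Delta> j) + sum_mset M"
    using supp_\<Delta>_later[OF assms(1), where k = "i - j"] assms(2,3) by auto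
  with assms(2) show ?thesis
    unfolding in_rplus_iff_sum_mset by (intro exI[of _ M]) auto
qed

lemma \<Delta>_eventually_zero: "\<forall>\<^sub>F i in sequentially. \<Delta> i x = 0"
proof -
  obtain N where N: "\<And>M. set_mset M \<subseteq> \<mu> \<Longrightarrow> sum_mset M = x - mag (\<Delta> 1) \<Longrightarrow> size M \<le> N"
    using rstar_representation_size_bounded[OF ratio_set] by blast
  have "\<Delta> i x = 0" if "i \<ge> N + 2" for i
  proof (rule ccontr)
    assume "\<Delta> i x \<noteq> 0"
    then have "x \<in> supp (\<Delta> (1 + (i - 1)))"
      using that unfolding supp_def by simp
    then obtain M where "set_mset M \<subseteq> \<mu>" "i - 1 \<le> size M" "x = mag (\<Delta> 1) + sum_mset M"
      using supp_\<Delta>_later[of 1] by blast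
    with N[of M] that show False by simp
  qed
  then show ?thesis
    unfolding eventually_sequentially by blast
qed

lemma S_eventually_limit: "\<forall>\<^sub>F i in sequentially. S i x = limit x"
proof -
  obtain K where K: "\<And>i. i \<ge> K \<Longrightarrow> \<Delta> i x = 0"
    using \<Delta>_eventually_zero[of x] unfolding eventually_sequentially by blast
  have const: "S i x = S K x" if "i \<ge> K" for i
    using that
  proof (induction i rule: dec_induct)
    case (step i)
    then show ?case using K[of i] by (simp add: \<Delta>_def)
  qed simp
  then have const_eventually: "\<forall>\<^sub>F i in sequentially. S i x = S K x"
    unfolding eventually_sequentially by blast
  then have "limit x = S K x"
    unfolding limit_def by (intro limI tendsto_eventually)
  with const_eventually show ?thesis by simp
qed

lemma limit_minus_eq_sum: "\<forall>\<^sub>F N in sequentially. (limit - S j) x = (\<Sum>i = j..<N. \<Delta> i x)"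
  using S_eventually_limit[of x] eventually_ge_at_top[of j]
proof eventually_elim
  case (elim N)
  then show ?case
    using sum_Suc_diff'[of j N "\<lambda>i. S i x"] by (simp add: \<Delta>_def)
qed

lemma supp_limit_minus:
  assumes "x \<in> supp (limit - S j)"
  obtains i where "i \<ge> j" and "x \<in> supp (\<Delta> i)"
proof -
  obtain N where "(limit - S j) x = (\<Sum>i = j..<N. \<Delta> i x)"
    using limit_minus_eq_sum[of j x] unfolding eventually_sequentially by blast
  with assms have "(\<Sum>i = j..<N. \<Delta> i x) \<noteq> 0"
    unfolding supp_def by simp
  then obtain i where "i \<in> {j..<N}" and "\<Delta> i x \<noteq> 0"
    using sum.neutral[of "{j..<N}" "\<lambda>i. \<Delta> i x"] by blast
  then show ?thesis
    using that[of i] unfolding supp_def by simp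
qed

lemma limit_minus_at_mag:
  assumes "j \<ge> 1"
  shows "(limit - S j) (mag (\<Delta> j)) = \<Delta> j (mag (\<Delta> j))"
proof -
  obtain N where "N > j" and N: "(limit - S j) (mag (\<Delta> j)) = (\<Sum>i = j..<N. \<Delta> i (mag (\<Delta> j)))"
    using eventually_conj[OF limit_minus_eq_sum eventually_gt_at_top[of j]]
    unfolding eventually_sequentially by blast
  have "\<Delta> i (mag (\<Delta> j)) = 0" if "j < i" for i
  proof (rule ccontr)
    assume "\<Delta> i (mag (\<Delta> j)) \<noteq> 0"
    then have "(0::'g) \<in> rplus \<mu>"
      using supp_\<Delta>_later_rplus[OF assms that, of "mag (\<Delta> j)"] unfolding supp_def by simp
    then show False
      using rplus_neg[OF ratio_set] by blast
  qed
  then show ?thesis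
    unfolding N sum.atLeast_Suc_lessThan[OF \<open>N > j\<close>] by simp
qed

lemma supp_limit_minus_subset_grid:
  assumes "j \<ge> 1"
  shows "supp (limit - S j) \<subseteq> grid (mag (\<Delta> j)) \<mu>"
proof
  fix x assume "x \<in> supp (limit - S j)"
  then obtain i where "i \<ge> j" and "x \<in> supp (\<Delta> i)"
    by (rule supp_limit_minus)
  then have "x - mag (\<Delta> j) \<in> rstar \<mu>"
    using assms by (intro supp_\<Delta>_later_rstar)
  then show "x \<in> grid (mag (\<Delta> j)) \<mu>"
    by (intro CollectI exI[of _ "x - mag (\<Delta> j)"]) simp
qed

lemma mag_limit_minus:
  assumes "j \<ge> 1"
  shows "mag (\<Delta> j) \<in> supp (limit - S j)" and "mag (limit - S j) = mag (\<Delta> j)"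
proof -
  show in_supp: "mag (\<Delta> j) \<in> supp (limit - S j)"
    using limit_minus_at_mag[OF assms] mag_in_supp[OF ratio_set witnesses_\<Delta>[OF assms]]
    unfolding supp_def by simp
  have "n \<le> mag (\<Delta> j)" if "n \<in> supp (limit - S j)" for n
  proof -
    obtain w where "n = mag (\<Delta> j) + w" and "w \<in> rstar \<mu>"
      using supp_limit_minus_subset_grid[OF assms] \<open>n \<in> supp (limit - S j)\<close> by blast
    then show ?thesis
      using rstar_nonpos[OF ratio_set] by simp
  qed
  with in_supp show "mag (limit - S j) = mag (\<Delta> j)"
    by (simp add: mag_eqI)
qed

lemma witnesses_limit_minus:
  assumes "j \<ge> 1"
  shows "witnesses \<mu> (limit - S j)"
proof -
  have "limit - S j \<noteq> 0"
    using mag_limit_minus(1)[OF assms] unfolding supp_def by auto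
  then show ?thesis
    using supp_limit_minus_subset_grid[OF assms]
    unfolding witnesses_def mag_limit_minus(2)[OF assms] by blast
qed

lemma limit_minus_prec:
  assumes "j \<ge> 1"
  shows "ts_prec \<mu> (limit - S (Suc j)) (limit - S j)"
  unfolding ts_prec_def mono_prec_def
proof
  fix a assume "a \<in> supp (limit - S (Suc j))"
  then obtain i where "i \<ge> Suc j" and "a \<in> supp (\<Delta> i)"
    by (rule supp_limit_minus)
  then have "a - mag (\<Delta> j) \<in> rplus \<mu>"
    using assms by (intro supp_\<Delta>_later_rplus) auto
  then show "\<exists>b\<in>supp (limit - S j). a - b \<in> rplus \<mu>"
    using mag_limit_minus(1)[OF assms] by blast
qed

lemma geom_converges_limit: "geom_converges \<mu> S limit"
  unfolding geom_converges_def using witnesses_limit_minus limit_minus_prec by blast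

lemma grid_based_limit:
  assumes "grid_based (S 1)"
  shows "grid_based limit"
proof -
  have "witnesses \<mu> (limit - S 1)"
    by (simp add: witnesses_limit_minus)
  then have "grid_based (S 1 + (limit - S 1))"
    using assms ratio_set by (blast intro: grid_based_add witnesses_imp_grid_based)
  then show ?thesis by simp
qed

end

theorem proposition3p19:
  fixes \<mu> :: "'g::linordered_ab_group_add set"
    and S :: "nat \<Rightarrow> 'g \<Rightarrow> real"
  assumes "ratio_set \<mu>"
    and "\<forall>j\<ge>1. grid_based (S j)"
    and "geom_cauchy \<mu> S"
  shows "\<exists>L. grid_based L \<and> geom_converges \<mu> S L"
proof -
  interpret geom_cauchy_seq \<mu> S
    using assms(1,3) by unfold_locales
  show ?thesis
    using grid_based_limit assms(2) geom_converges_limit by blast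
qed

end
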